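(* Let $R$ be an elliptic core operator with nodes $Z_t=(x_t,y_t)$, $t=1,\dots,K$ (as defined in the context). Then for every $j=1,\dots,K$ there is a constant $C$ such that $|m|^{x_j}|n|^{y_j}\leqslant C|P_R(m,n)|$ for all real $m,n$ with $\max\{|m|,|n|\}$ sufficiently large.
   Context: Let $K\geqslant2$ and $Z_t=(x_t,y_t)$, $t=1,\dots,K$, be points with nonnegative integer coordinates, $x_1>\dots>x_K$, $y_1<\dots<y_K$, slopes $s_t=(y_{t+1}-y_t)/(x_{t+1}-x_t)$ satisfying $s_1<\dots<s_{K-1}<0$ (a concave broken line). The core is $\bigcup_{t=1}^{K-1}[Z_t,Z_{t+1}]$. A core operator is $R=\sum_Pc_P\partial_1^{P_1}\partial_2^{P_2}$ (differential operator on $\mathbb{T}^2$) over integer points $P$ of the core, with $c_{Z_t}\ne0$ for all $t$; its characteristic polynomial is $P_R(x,y)=\sum_Pc_P(2\pi ix)^{P_1}(2\pi iy)^{P_2}$. With $S_t$ the sum of terms of $R$ whose biindices lie on $[Z_t,Z_{t+1}]$, $R$ is elliptic if each $P_{S_t}$ ($t=1,\dots,K-1$) has no zeros in $\mathbb{R}^2$ outside the coordinate axes. *)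

theory Defs
  imports "HOL-Analysis.Analysis"
begin

text \<open>Nodes are given as a function Z :: nat => nat * nat, used on indices 1..K.
  Coordinates are nonnegative integers, hence nat.\<close>

definition slope :: "(nat \<Rightarrow> nat \<times> nat) \<Rightarrow> nat \<Rightarrow> real" where
  "slope Z t = (real (snd (Z (Suc t))) - real (snd (Z t))) /
                (real (fst (Z (Suc t))) - real (fst (Z t)))"

definition concave_broken_line :: "nat \<Rightarrow> (nat \<Rightarrow> nat \<times> nat) \<Rightarrow> bool" where
  "concave_broken_line K Z \<longleftrightarrow> K \<ge> 2
     \<and> (\<forall>t\<in>{1..<K}. fst (Z (Suc t)) < fst (Z t) \<and> snd (Z t) < snd (Z (Suc t)))
     \<and> (\<forall>t\<in>{1..<K-1}. slope Z t < slope Z (Suc t))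
     \<and> slope Z (K - 1) < 0"

definition node_pt :: "nat \<times> nat \<Rightarrow> real \<times> real" where
  "node_pt P = (real (fst P), real (snd P))"

definition seg_pts :: "(nat \<Rightarrow> nat \<times> nat) \<Rightarrow> nat \<Rightarrow> (nat \<times> nat) set" where
  "seg_pts Z t = {P. node_pt P \<in> closed_segment (node_pt (Z t)) (node_pt (Z (Suc t)))}"

definition core_pts :: "nat \<Rightarrow> (nat \<Rightarrow> nat \<times> nat) \<Rightarrow> (nat \<times> nat) set" where
  "core_pts K Z = (\<Union>t\<in>{1..<K}. seg_pts Z t)"

text \<open>Characteristic polynomial of the operator sum over P in A of c_P d1^P1 d2^P2.\<close>
definition char_poly :: "(nat \<times> nat) set \<Rightarrow> (nat \<times> nat \<Rightarrow> complex) \<Rightarrow> real \<Rightarrow> real \<Rightarrow> complex" where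
  "char_poly A c x y = (\<Sum>P\<in>A. c P * (2 * of_real pi * \<i> * of_real x) ^ fst P
                                       * (2 * of_real pi * \<i> * of_real y) ^ snd P)"

text \<open>Core operator R = sum over core points P of c_P d1^P1 d2^P2 with c_(Z_t) nonzero.\<close>
definition core_operator :: "nat \<Rightarrow> (nat \<Rightarrow> nat \<times> nat) \<Rightarrow> (nat \<times> nat \<Rightarrow> complex) \<Rightarrow> bool" where
  "core_operator K Z c \<longleftrightarrow> concave_broken_line K Z \<and> (\<forall>t\<in>{1..K}. c (Z t) \<noteq> 0)"

definition elliptic :: "nat \<Rightarrow> (nat \<Rightarrow> nat \<times> nat) \<Rightarrow> (nat \<times> nat \<Rightarrow> complex) \<Rightarrow> bool" where
  "elliptic K Z c \<longleftrightarrow> (\<forall>t\<in>{1..<K}. \<forall>x y :: real. x \<noteq> 0 \<longrightarrow> y \<noteq> 0 \<longrightarrow>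
       char_poly (seg_pts Z t) c x y \<noteq> 0)"

end

(*
  On a segment [Z t, Z (t+1)] the symbol factors as m^x(t+1) * n^y(t) * Q(m, n) with Q
  quasi-homogeneous.  Ellipticity, together with c (Z t) and c (Z (t+1)) being nonzero, makes Q
  vanish only at the origin, so by compactness of a quasi-sphere the segment symbol dominates the
  monomials of both endpoints.

  In logarithmic coordinates (a, b) = (ln |m|, ln |n|) the monomial |m|^x |n|^y is exp (x a + y b).
  The direction (a, b) lies in the normal cone of some vertex Z i: it is a nonnegative combination
  of the integer normals of the two edges at Z i (at Z 1 and Z K one of them is an axis-parallel
  ray).  An integer linear form drops by at least 1 off the face it supports, so every monomial off
  a suitable segment through Z i is smaller than the monomial of Z i by a factor that tends to 0 as
  max a b grows.  For large (m, n) the symbol of that segment therefore dominates P_R, while the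
  monomial of Z i dominates those of all nodes.  The coordinate axes follow by continuity.
*)

theory Submission
  imports Defs
begin

lemma ex_pos_uniform_finite:
  fixes Q :: "'i \<Rightarrow> real \<Rightarrow> bool"
  assumes "finite I" "\<And>i. i \<in> I \<Longrightarrow> \<exists>\<delta>>0. Q i \<delta>"
    and mono: "\<And>i \<delta> \<delta>'. Q i \<delta> \<Longrightarrow> 0 < \<delta>' \<Longrightarrow> \<delta>' \<le> \<delta> \<Longrightarrow> Q i \<delta>'"
  shows "\<exists>\<delta>>0. \<forall>i\<in>I. Q i \<delta>"
  using assms(1,2)
proof (induction I rule: finite_induct)
  case empty
  show ?case by (auto intro: exI[of _ 1])
next
  case (insert i I)
  obtain \<delta>1 where "0 < \<delta>1" "\<forall>i\<in>I. Q i \<delta>1"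
    using insert by auto
  moreover obtain \<delta>2 where "0 < \<delta>2" "Q i \<delta>2"
    using insert by auto
  ultimately show ?case
    by (intro exI[of _ "min \<delta>1 \<delta>2"]) (auto intro: mono)
qed

lemma discrete_ivt:
  fixes D :: "nat \<Rightarrow> real"
  assumes "p < q" "0 \<le> D p" "D q \<le> 0"
  shows "\<exists>i. p < i \<and> i \<le> q \<and> 0 \<le> D (i - 1) \<and> D i \<le> 0"
proof -
  define i where "i = (LEAST i. p < i \<and> D i \<le> 0)"
  have "p < i" "D i \<le> 0" "i \<le> q"
    using LeastI[of "\<lambda>i. p < i \<and> D i \<le> 0" q] Least_le[of "\<lambda>i. p < i \<and> D i \<le> 0" q] assms
    by (simp_all add: i_def)
  moreover have "0 \<le> D (i - 1)"
  proof (cases "i - 1 = p")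
    case False
    then have "\<not> D (i - 1) \<le> 0"
      using not_less_Least[of "i - 1" "\<lambda>i. p < i \<and> D i \<le> 0"] \<open>p < i\<close> by (simp add: i_def)
    then show ?thesis by simp
  qed (use assms in simp)
  ultimately show ?thesis by blast
qed

lemma less_by_Suc_steps:
  fixes f :: "nat \<Rightarrow> 'a::order"
  assumes incr: "\<And>l. i \<le> l \<Longrightarrow> l < j \<Longrightarrow> f l < f (Suc l)"
    and "i \<le> k" "k < l" "l \<le> j"
  shows "f k < f l"
proof -
  have "Suc k \<le> l" using \<open>k < l\<close> by simp
  then show ?thesis
    using \<open>l \<le> j\<close>
  proof (induction l rule: dec_induct)
    case base
    then show ?case using incr \<open>i \<le> k\<close> by simp
  next
    case (step l)
    then have "f l < f (Suc l)" using incr \<open>i \<le> k\<close> by simp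
    with step show ?case by simp
  qed
qed

lemma isCont_nonneg_if_nonneg_punctured:
  fixes f :: "real \<Rightarrow> real"
  assumes "isCont f x" "\<And>y. y \<noteq> x \<Longrightarrow> 0 \<le> f y"
  shows "0 \<le> f x"
proof (rule tendsto_lowerbound)
  show "(f \<longlongrightarrow> f x) (at x)"
    using assms(1) by (simp add: isCont_def)
  show "\<forall>\<^sub>F y in at x. 0 \<le> f y"
    using assms(2) by (simp add: eventually_at_filter)
qed simp

lemma nonneg_extends_to_axes:
  fixes h :: "real \<Rightarrow> real \<Rightarrow> real"
  assumes "0 < M"
    and "\<And>n. isCont (\<lambda>x. h x n) 0" "\<And>m. isCont (\<lambda>y. h m y) 0"
    and off_axes: "\<And>m n. m \<noteq> 0 \<Longrightarrow> n \<noteq> 0 \<Longrightarrow> M \<le> max \<bar>m\<bar> \<bar>n\<bar> \<Longrightarrow> 0 \<le> h m n"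
    and "M \<le> max \<bar>m\<bar> \<bar>n\<bar>"
  shows "0 \<le> h m n"
proof -
  consider "m \<noteq> 0" "n \<noteq> 0" | "M \<le> \<bar>m\<bar>" "n = 0" | "M \<le> \<bar>n\<bar>" "m = 0"
    using assms(1,5) by (cases "m = 0"; cases "n = 0") (auto simp: max_def split: if_splits)
  then show ?thesis
  proof cases
    case 1
    then show ?thesis using off_axes assms(5) by simp
  next
    case 2
    have "0 \<le> h m y" if "y \<noteq> 0" for y
      using off_axes[OF _ that] 2 assms(1) by auto
    then show ?thesis
      using isCont_nonneg_if_nonneg_punctured[OF assms(3)] 2 by simp
  next
    case 3
    have "0 \<le> h x n" if "x \<noteq> 0" for x
      using off_axes[OF that] 3 assms(1) by auto
    then show ?thesis
      using isCont_nonneg_if_nonneg_punctured[OF assms(2)] 3 by simp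
  qed
qed

definition cross2 :: "'a \<times> 'a \<Rightarrow> 'a \<times> 'a \<Rightarrow> 'a::comm_ring" where
  "cross2 u w = fst u * snd w - snd u * fst w"

lemma cone_decomposition:
  fixes u w v :: "real \<times> real"
  assumes "0 < cross2 u w" "0 \<le> cross2 u v" "cross2 w v \<le> 0"
  shows "\<exists>k1 k2. 0 \<le> k1 \<and> 0 \<le> k2 \<and> v = k1 *\<^sub>R u + k2 *\<^sub>R w"
proof (intro exI conjI)
  show "0 \<le> - cross2 w v / cross2 u w" "0 \<le> cross2 u v / cross2 u w"
    using assms by (simp_all add: divide_nonpos_pos)
  have "cross2 u w *\<^sub>R v = (- cross2 w v) *\<^sub>R u + cross2 u v *\<^sub>R w"
    by (simp add: prod_eq_iff cross2_def algebra_simps)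
  then have "v = inverse (cross2 u w) *\<^sub>R ((- cross2 w v) *\<^sub>R u + cross2 u v *\<^sub>R w)"
    using assms(1) by (metis less_irrefl scaleR_scaleR left_inverse scaleR_one)
  then show "v = (- cross2 w v / cross2 u w) *\<^sub>R u + (cross2 u v / cross2 u w) *\<^sub>R w"
    by (simp add: scaleR_add_right scaleR_diff_right divide_inverse_commute)
qed

lemma linear_on_closed_segment:
  fixes f :: "'a::real_vector \<Rightarrow> real"
  assumes "linear f" "p \<in> closed_segment x y" "f x \<le> M" "f y \<le> M"
  shows "f p \<le> M"
    and "f p = M \<Longrightarrow> (p = x \<and> f x = M) \<or> (p = y \<and> f y = M) \<or> (f x = M \<and> f y = M)"
proof -
  obtain u where u: "0 \<le> u" "u \<le> 1" and p: "p = (1 - u) *\<^sub>R x + u *\<^sub>R y"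
    using assms(2) by (auto simp: closed_segment_def)
  have fp: "f p = (1 - u) * f x + u * f y"
    using p linear_add[OF assms(1)] linear_scale[OF assms(1)] by simp
  have "(1 - u) * f x \<le> (1 - u) * M" "u * f y \<le> u * M"
    using u assms(3,4) by (simp_all add: mult_left_mono)
  then show "f p \<le> M"
    unfolding fp by (simp add: algebra_simps)
  assume "f p = M"
  consider "u = 0" | "u = 1" | "0 < u" "u < 1"
    using u by linarith
  then show "(p = x \<and> f x = M) \<or> (p = y \<and> f y = M) \<or> (f x = M \<and> f y = M)"
  proof cases
    case 3
    have "(1 - u) * (M - f x) + u * (M - f y) = 0"
      using \<open>f p = M\<close> unfolding fp by (simp add: algebra_simps)
    moreover have "0 \<le> (1 - u) * (M - f x)" "0 \<le> u * (M - f y)"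
      using 3 assms(3,4) by simp_all
    ultimately show ?thesis
      using 3 by (simp add: add_nonneg_eq_0_iff)
  qed (use p \<open>f p = M\<close> in auto)
qed

subsection \<open>Quasi-homogeneous functions\<close>

definition quasi_sphere :: "nat \<Rightarrow> nat \<Rightarrow> (real \<times> real) set" where
  "quasi_sphere a b = {z. fst z ^ (2 * a) + snd z ^ (2 * b) = 1}"

lemma quasi_sphere_abs_le:
  assumes "z \<in> quasi_sphere a b"
  shows "\<bar>fst z\<bar> ^ a \<le> 1" "\<bar>snd z\<bar> ^ b \<le> 1"
proof -
  have abs_pow_sq: "(\<bar>x\<bar> ^ k)\<^sup>2 = x ^ (2 * k)" for x :: real and k
    by (metis power2_abs power_abs power_mult mult.commute)
  have "(\<bar>fst z\<bar> ^ a)\<^sup>2 + (\<bar>snd z\<bar> ^ b)\<^sup>2 = 1"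
    using assms by (simp add: quasi_sphere_def abs_pow_sq)
  then have "(\<bar>fst z\<bar> ^ a)\<^sup>2 \<le> 1" "(\<bar>snd z\<bar> ^ b)\<^sup>2 \<le> 1"
    by (smt (verit) zero_le_power2)+
  then show "\<bar>fst z\<bar> ^ a \<le> 1" "\<bar>snd z\<bar> ^ b \<le> 1"
    by (simp_all add: abs_square_le_1)
qed

lemma compact_quasi_sphere:
  assumes "0 < a" "0 < b"
  shows "compact (quasi_sphere a b)"
proof -
  have "quasi_sphere a b \<subseteq> cball 0 2"
  proof
    fix z assume "z \<in> quasi_sphere a b"
    then have "\<bar>fst z\<bar> \<le> 1" "\<bar>snd z\<bar> \<le> 1"
      using quasi_sphere_abs_le[of z a b] assms by (simp_all add: power_le_one_iff)
    then show "z \<in> cball 0 2"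
      using norm_Pair_le[of "fst z" "snd z"] by simp
  qed
  moreover have "closed (quasi_sphere a b)"
    unfolding quasi_sphere_def by (intro closed_Collect_eq continuous_intros)
  ultimately show ?thesis
    by (meson bounded_cball bounded_subset compact_eq_bounded_closed)
qed

lemma scale_into_quasi_sphere:
  assumes "0 < a" "0 < b" "m \<noteq> 0 \<or> n \<noteq> 0"
  shows "\<exists>l>0. (l ^ b * m, l ^ a * n) \<in> quasi_sphere a b"
proof -
  define \<rho> where "\<rho> = m ^ (2 * a) + n ^ (2 * b)"
  have "0 < \<rho>"
    using assms(3) by (auto simp: \<rho>_def power_mult add_pos_nonneg add_nonneg_pos)
  define l where "l = (1 / \<rho>) powr (1 / real (2 * a * b))"
  have "l ^ (2 * a * b) = 1 / \<rho>"
    using assms(1,2) \<open>0 < \<rho>\<close> by (simp add: l_def powr_realpow[symmetric] powr_powr)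
  moreover have "(l ^ b * m) ^ (2 * a) + (l ^ a * n) ^ (2 * b) = l ^ (2 * a * b) * \<rho>"
    by (simp add: \<rho>_def power_mult_distrib power_mult[symmetric] algebra_simps)
  ultimately show ?thesis
    using \<open>0 < \<rho>\<close> by (intro exI[of _ l]) (simp add: quasi_sphere_def l_def)
qed

lemma quasi_homogeneous_lower_bound:
  fixes Q :: "real \<Rightarrow> real \<Rightarrow> 'a::real_normed_vector" and a b :: nat
  assumes "0 < a" "0 < b"
    and cont: "continuous_on UNIV (\<lambda>z. Q (fst z) (snd z))"
    and hom: "\<And>l m n. 0 < l \<Longrightarrow> norm (Q (l ^ b * m) (l ^ a * n)) = l ^ (a * b) * norm (Q m n)"
    and nonzero: "\<And>m n. m \<noteq> 0 \<or> n \<noteq> 0 \<Longrightarrow> Q m n \<noteq> 0"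
  shows "\<exists>\<delta>>0. \<forall>m n. \<delta> * max (\<bar>m\<bar> ^ a) (\<bar>n\<bar> ^ b) \<le> norm (Q m n)"
proof -
  have "(1, 0) \<in> quasi_sphere a b"
    using \<open>0 < b\<close> by (simp add: quasi_sphere_def)
  then obtain z0 where "z0 \<in> quasi_sphere a b"
    and z0_min: "\<And>z. z \<in> quasi_sphere a b \<Longrightarrow> norm (Q (fst z0) (snd z0)) \<le> norm (Q (fst z) (snd z))"
    using continuous_attains_inf[OF compact_quasi_sphere[OF \<open>0 < a\<close> \<open>0 < b\<close>], of "\<lambda>z. norm (Q (fst z) (snd z))"]
      continuous_on_subset[OF cont] continuous_on_norm by blast
  define \<delta> where "\<delta> = norm (Q (fst z0) (snd z0))"
  have "fst z0 \<noteq> 0 \<or> snd z0 \<noteq> 0"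
    using \<open>z0 \<in> quasi_sphere a b\<close> \<open>0 < a\<close> \<open>0 < b\<close> by (auto simp: quasi_sphere_def power_0_left)
  then have "0 < \<delta>"
    using nonzero by (simp add: \<delta>_def)
  have "\<delta> * max (\<bar>m\<bar> ^ a) (\<bar>n\<bar> ^ b) \<le> norm (Q m n)" for m n
  proof (cases "m = 0 \<and> n = 0")
    case True
    then show ?thesis using \<open>0 < a\<close> \<open>0 < b\<close> by (simp add: power_0_left)
  next
    case False
    then obtain l where "0 < l" and z: "(l ^ b * m, l ^ a * n) \<in> quasi_sphere a b"
      using scale_into_quasi_sphere[OF \<open>0 < a\<close> \<open>0 < b\<close>] by blast
    have "l ^ (a * b) * \<bar>m\<bar> ^ a \<le> 1" "l ^ (a * b) * \<bar>n\<bar> ^ b \<le> 1"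
      using quasi_sphere_abs_le[OF z] \<open>0 < l\<close>
      by (simp_all add: abs_mult power_mult_distrib power_mult[symmetric] mult.commute)
    then have "\<delta> * (l ^ (a * b) * max (\<bar>m\<bar> ^ a) (\<bar>n\<bar> ^ b)) \<le> \<delta>"
      using \<open>0 < \<delta>\<close> \<open>0 < l\<close> by (simp add: max_mult_distrib_left mult_left_le)
    also have "\<delta> \<le> l ^ (a * b) * norm (Q m n)"
      using z0_min[OF z] hom[OF \<open>0 < l\<close>] by (simp add: \<delta>_def)
    finally show ?thesis
      using \<open>0 < l\<close> by (simp add: mult.left_commute)
  qed
  then show ?thesis
    using \<open>0 < \<delta>\<close> by blast
qed

subsection \<open>Symbols and monomials\<close>

definition monomial_abs :: "nat \<times> nat \<Rightarrow> real \<Rightarrow> real \<Rightarrow> real" where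
  "monomial_abs P m n = \<bar>m\<bar> ^ fst P * \<bar>n\<bar> ^ snd P"

lemma monomial_abs_eq_exp:
  assumes "m \<noteq> 0" "n \<noteq> 0"
  shows "monomial_abs P m n = exp (real (fst P) * ln \<bar>m\<bar> + real (snd P) * ln \<bar>n\<bar>)"
  using assms by (simp add: monomial_abs_def exp_add exp_of_nat_mult)

lemma norm_char_poly_le:
  assumes "finite S" "\<And>P. P \<in> S \<Longrightarrow> monomial_abs P m n \<le> B"
  shows "cmod (char_poly S c m n) \<le> (\<Sum>P\<in>S. cmod (c P) * (2 * pi) ^ (fst P + snd P)) * B"
proof -
  have "cmod (char_poly S c m n) \<le> (\<Sum>P\<in>S. cmod (c P) * (2 * pi) ^ (fst P + snd P) * monomial_abs P m n)"
    unfolding char_poly_def monomial_abs_def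
    by (rule order_trans[OF norm_sum])
      (simp add: norm_mult norm_power power_add power_mult_distrib abs_mult mult_ac)
  also have "\<dots> \<le> (\<Sum>P\<in>S. cmod (c P) * (2 * pi) ^ (fst P + snd P) * B)"
    using assms(2) by (intro sum_mono mult_left_mono) auto
  finally show ?thesis
    by (simp add: sum_distrib_right)
qed

lemma char_poly_dominant_part:
  assumes "finite S" "T \<subseteq> S" "0 \<le> \<epsilon>" "0 \<le> B"
    and part: "\<delta> * B \<le> cmod (char_poly T c m n)"
    and rest: "\<And>P. P \<in> S - T \<Longrightarrow> monomial_abs P m n \<le> \<epsilon> * B"
    and small: "(\<Sum>P\<in>S. cmod (c P) * (2 * pi) ^ (fst P + snd P)) * \<epsilon> \<le> \<delta> / 2"
  shows "\<delta> / 2 * B \<le> cmod (char_poly S c m n)"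
proof -
  have split: "char_poly S c m n = char_poly (S - T) c m n + char_poly T c m n"
    unfolding char_poly_def by (rule sum.subset_diff[OF assms(2,1)])
  have "cmod (char_poly (S - T) c m n) \<le> (\<Sum>P\<in>S - T. cmod (c P) * (2 * pi) ^ (fst P + snd P)) * (\<epsilon> * B)"
    using assms(1) rest by (intro norm_char_poly_le) auto
  also have "\<dots> \<le> (\<Sum>P\<in>S. cmod (c P) * (2 * pi) ^ (fst P + snd P)) * (\<epsilon> * B)"
    using assms(1,3,4) by (intro mult_right_mono sum_mono2) auto
  also have "\<dots> \<le> \<delta> / 2 * B"
    using mult_right_mono[OF small assms(4)] by (simp add: mult.assoc)
  finally have "cmod (char_poly (S - T) c m n) \<le> \<delta> / 2 * B" .
  moreover have "cmod (char_poly T c m n) \<le> cmod (char_poly S c m n) + cmod (char_poly (S - T) c m n)"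
    using norm_triangle_ineq4[of "char_poly S c m n" "char_poly (S - T) c m n"] unfolding split by simp
  ultimately show ?thesis
    using part by linarith
qed

subsection \<open>A single segment\<close>

lemma seg_pts_iff:
  "P \<in> seg_pts Z t \<longleftrightarrow> (\<exists>u. 0 \<le> u \<and> u \<le> 1 \<and>
     real (fst P) = (1 - u) * real (fst (Z t)) + u * real (fst (Z (Suc t))) \<and>
     real (snd P) = (1 - u) * real (snd (Z t)) + u * real (snd (Z (Suc t))))"
  unfolding seg_pts_def node_pt_def closed_segment_def by (auto simp: prod_eq_iff)

lemma endpoints_in_seg_pts: "Z t \<in> seg_pts Z t" "Z (Suc t) \<in> seg_pts Z t"
  unfolding seg_pts_def by simp_all

lemma finite_seg_pts: "finite (seg_pts Z t)"
proof (rule finite_subset)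
  show "seg_pts Z t \<subseteq> {..fst (Z t) + fst (Z (Suc t))} \<times> {..snd (Z t) + snd (Z (Suc t))}"
  proof
    fix P assume "P \<in> seg_pts Z t"
    then obtain u where u: "0 \<le> u" "u \<le> 1"
      and x: "real (fst P) = (1 - u) * real (fst (Z t)) + u * real (fst (Z (Suc t)))"
      and y: "real (snd P) = (1 - u) * real (snd (Z t)) + u * real (snd (Z (Suc t)))"
      unfolding seg_pts_iff by blast
    have convex_le: "(1 - u) * real k + u * real l \<le> real (k + l)" for k l
      using u by (simp add: add_mono mult_left_le_one_le)
    show "P \<in> {..fst (Z t) + fst (Z (Suc t))} \<times> {..snd (Z t) + snd (Z (Suc t))}"
      using convex_le[of "fst (Z t)" "fst (Z (Suc t))"] convex_le[of "snd (Z t)" "snd (Z (Suc t))"]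
      unfolding x[symmetric] y[symmetric] of_nat_le_iff mem_Times_iff by simp
  qed
qed simp

(* The truncated subtractions are exact: every point P of the segment has
   fst (Z (Suc t)) \<le> fst P and snd (Z t) \<le> snd P. *)
definition reduced_symbol ::
    "(nat \<Rightarrow> nat \<times> nat) \<Rightarrow> (nat \<times> nat \<Rightarrow> complex) \<Rightarrow> nat \<Rightarrow> real \<Rightarrow> real \<Rightarrow> complex" where
  "reduced_symbol Z c t m n = (\<Sum>P\<in>seg_pts Z t. c P * (2 * of_real pi * \<i>) ^ (fst P + snd P)
      * of_real m ^ (fst P - fst (Z (Suc t))) * of_real n ^ (snd P - snd (Z t)))"

context
  fixes Z :: "nat \<Rightarrow> nat \<times> nat" and t :: nat
  assumes x_decr: "fst (Z (Suc t)) < fst (Z t)" and y_incr: "snd (Z t) < snd (Z (Suc t))"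
begin

lemma seg_pts_on_line:
  assumes "P \<in> seg_pts Z t"
  shows "fst (Z (Suc t)) \<le> fst P" "snd (Z t) \<le> snd P"
    and "(snd (Z (Suc t)) - snd (Z t)) * (fst P - fst (Z (Suc t)))
          + (fst (Z t) - fst (Z (Suc t))) * (snd P - snd (Z t))
         = (fst (Z t) - fst (Z (Suc t))) * (snd (Z (Suc t)) - snd (Z t))"
proof -
  define \<alpha> where "\<alpha> = fst (Z t) - fst (Z (Suc t))"
  define \<beta> where "\<beta> = snd (Z (Suc t)) - snd (Z t)"
  obtain u where u: "0 \<le> u" "u \<le> 1"
    and "real (fst P) = (1 - u) * real (fst (Z t)) + u * real (fst (Z (Suc t)))"
    and "real (snd P) = (1 - u) * real (snd (Z t)) + u * real (snd (Z (Suc t)))"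
    using assms unfolding seg_pts_iff by blast
  then have x: "real (fst P) = real (fst (Z (Suc t))) + (1 - u) * real \<alpha>"
    and y: "real (snd P) = real (snd (Z t)) + u * real \<beta>"
    using x_decr y_incr by (simp_all add: \<alpha>_def \<beta>_def of_nat_diff algebra_simps)
  have "real (fst (Z (Suc t))) \<le> real (fst P)" "real (snd (Z t)) \<le> real (snd P)"
    using x y u by simp_all
  then show x_ge: "fst (Z (Suc t)) \<le> fst P" and y_ge: "snd (Z t) \<le> snd P"
    by simp_all
  have dx: "real (fst P - fst (Z (Suc t))) = (1 - u) * real \<alpha>"
    and dy: "real (snd P - snd (Z t)) = u * real \<beta>"
    using x y x_ge y_ge by (simp_all add: of_nat_diff)
  have "real \<beta> * real (fst P - fst (Z (Suc t))) + real \<alpha> * real (snd P - snd (Z t))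
      = real \<alpha> * real \<beta>"
    unfolding dx dy by (simp add: algebra_simps)
  then have "real (\<beta> * (fst P - fst (Z (Suc t))) + \<alpha> * (snd P - snd (Z t))) = real (\<alpha> * \<beta>)"
    by (simp only: of_nat_add of_nat_mult)
  then show "\<beta> * (fst P - fst (Z (Suc t))) + \<alpha> * (snd P - snd (Z t)) = \<alpha> * \<beta>"
    by (simp only: of_nat_eq_iff)
qed

lemma seg_pts_eq_right_endpoint:
  assumes "P \<in> seg_pts Z t" "fst P = fst (Z (Suc t))"
  shows "P = Z (Suc t)"
proof -
  have "(fst (Z t) - fst (Z (Suc t))) * (snd P - snd (Z t))
      = (fst (Z t) - fst (Z (Suc t))) * (snd (Z (Suc t)) - snd (Z t))"
    using seg_pts_on_line[OF assms(1)] assms(2) by simp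
  then have "snd P - snd (Z t) = snd (Z (Suc t)) - snd (Z t)"
    using x_decr by simp
  then show ?thesis
    using seg_pts_on_line(2)[OF assms(1)] y_incr assms(2) by (simp add: prod_eq_iff)
qed

lemma seg_pts_eq_left_endpoint:
  assumes "P \<in> seg_pts Z t" "snd P = snd (Z t)"
  shows "P = Z t"
proof -
  have "(snd (Z (Suc t)) - snd (Z t)) * (fst P - fst (Z (Suc t)))
      = (fst (Z t) - fst (Z (Suc t))) * (snd (Z (Suc t)) - snd (Z t))"
    using seg_pts_on_line[OF assms(1)] assms(2) by simp
  then have "fst P - fst (Z (Suc t)) = fst (Z t) - fst (Z (Suc t))"
    using y_incr by simp
  then show ?thesis
    using seg_pts_on_line(1)[OF assms(1)] x_decr assms(2) by (simp add: prod_eq_iff)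
qed

lemma char_poly_seg_factor:
  "char_poly (seg_pts Z t) c m n
     = of_real m ^ fst (Z (Suc t)) * of_real n ^ snd (Z t) * reduced_symbol Z c t m n"
  unfolding char_poly_def reduced_symbol_def sum_distrib_left
proof (rule sum.cong[OF refl])
  fix P assume "P \<in> seg_pts Z t"
  then obtain p q where "fst P = fst (Z (Suc t)) + p" "snd P = snd (Z t) + q"
    using seg_pts_on_line(1,2) le_Suc_ex by metis
  then show "c P * (2 * of_real pi * \<i> * of_real m) ^ fst P * (2 * of_real pi * \<i> * of_real n) ^ snd P
      = of_real m ^ fst (Z (Suc t)) * of_real n ^ snd (Z t) *
        (c P * (2 * of_real pi * \<i>) ^ (fst P + snd P)
          * of_real m ^ (fst P - fst (Z (Suc t))) * of_real n ^ (snd P - snd (Z t)))"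
    by (simp add: power_mult_distrib power_add algebra_simps)
qed

lemma reduced_symbol_scale:
  "reduced_symbol Z c t (l ^ (snd (Z (Suc t)) - snd (Z t)) * m) (l ^ (fst (Z t) - fst (Z (Suc t))) * n)
     = of_real l ^ ((fst (Z t) - fst (Z (Suc t))) * (snd (Z (Suc t)) - snd (Z t)))
       * reduced_symbol Z c t m n"
  unfolding reduced_symbol_def sum_distrib_left
proof (rule sum.cong[OF refl])
  fix P assume P: "P \<in> seg_pts Z t"
  define \<alpha> where "\<alpha> = fst (Z t) - fst (Z (Suc t))"
  define \<beta> where "\<beta> = snd (Z (Suc t)) - snd (Z t)"
  define p where "p = fst P - fst (Z (Suc t))"
  define q where "q = snd P - snd (Z t)"
  have "\<alpha> * \<beta> = \<beta> * p + \<alpha> * q"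
    using seg_pts_on_line(3)[OF P] by (simp add: \<alpha>_def \<beta>_def p_def q_def)
  then have "(of_real l ^ \<beta> * of_real m) ^ p * (of_real l ^ \<alpha> * of_real n) ^ q
      = of_real l ^ (\<alpha> * \<beta>) * (of_real m ^ p * (of_real n ^ q :: complex))"
    by (simp add: power_add power_mult power_mult_distrib algebra_simps)
  then show "c P * (2 * of_real pi * \<i>) ^ (fst P + snd P)
      * of_real (l ^ (snd (Z (Suc t)) - snd (Z t)) * m) ^ (fst P - fst (Z (Suc t)))
      * of_real (l ^ (fst (Z t) - fst (Z (Suc t))) * n) ^ (snd P - snd (Z t))
    = of_real l ^ ((fst (Z t) - fst (Z (Suc t))) * (snd (Z (Suc t)) - snd (Z t)))
      * (c P * (2 * of_real pi * \<i>) ^ (fst P + snd P)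
         * of_real m ^ (fst P - fst (Z (Suc t))) * of_real n ^ (snd P - snd (Z t)))"
    by (simp add: \<alpha>_def \<beta>_def p_def q_def algebra_simps)
qed

lemma reduced_symbol_m_zero:
  "reduced_symbol Z c t 0 n = c (Z (Suc t)) * (2 * of_real pi * \<i>) ^ (fst (Z (Suc t)) + snd (Z (Suc t)))
     * of_real n ^ (snd (Z (Suc t)) - snd (Z t))"
proof -
  have "reduced_symbol Z c t 0 n = (\<Sum>P\<in>{Z (Suc t)}. c P * (2 * of_real pi * \<i>) ^ (fst P + snd P)
      * of_real 0 ^ (fst P - fst (Z (Suc t))) * of_real n ^ (snd P - snd (Z t)))"
    unfolding reduced_symbol_def
  proof (rule sum.mono_neutral_right[OF finite_seg_pts])
    show "{Z (Suc t)} \<subseteq> seg_pts Z t"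
      using endpoints_in_seg_pts(2) by simp
    show "\<forall>P\<in>seg_pts Z t - {Z (Suc t)}. c P * (2 * of_real pi * \<i>) ^ (fst P + snd P)
      * of_real 0 ^ (fst P - fst (Z (Suc t))) * of_real n ^ (snd P - snd (Z t)) = 0"
      using seg_pts_on_line(1) seg_pts_eq_right_endpoint by (fastforce simp: le_less)
  qed
  then show ?thesis
    by simp
qed

lemma reduced_symbol_n_zero:
  "reduced_symbol Z c t m 0 = c (Z t) * (2 * of_real pi * \<i>) ^ (fst (Z t) + snd (Z t))
     * of_real m ^ (fst (Z t) - fst (Z (Suc t)))"
proof -
  have "reduced_symbol Z c t m 0 = (\<Sum>P\<in>{Z t}. c P * (2 * of_real pi * \<i>) ^ (fst P + snd P)
      * of_real m ^ (fst P - fst (Z (Suc t))) * of_real 0 ^ (snd P - snd (Z t)))"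
    unfolding reduced_symbol_def
  proof (rule sum.mono_neutral_right[OF finite_seg_pts])
    show "{Z t} \<subseteq> seg_pts Z t"
      using endpoints_in_seg_pts(1) by simp
    show "\<forall>P\<in>seg_pts Z t - {Z t}. c P * (2 * of_real pi * \<i>) ^ (fst P + snd P)
      * of_real m ^ (fst P - fst (Z (Suc t))) * of_real 0 ^ (snd P - snd (Z t)) = 0"
      using seg_pts_on_line(2) seg_pts_eq_left_endpoint by (fastforce simp: le_less)
  qed
  then show ?thesis
    by simp
qed

lemma reduced_symbol_nonzero:
  assumes "c (Z t) \<noteq> 0" "c (Z (Suc t)) \<noteq> 0"
    and elliptic_seg: "\<And>x y. x \<noteq> 0 \<Longrightarrow> y \<noteq> 0 \<Longrightarrow> char_poly (seg_pts Z t) c x y \<noteq> 0"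
    and "m \<noteq> 0 \<or> n \<noteq> 0"
  shows "reduced_symbol Z c t m n \<noteq> 0"
proof -
  consider "m = 0" "n \<noteq> 0" | "n = 0" "m \<noteq> 0" | "m \<noteq> 0" "n \<noteq> 0"
    using assms(4) by blast
  then show ?thesis
  proof cases
    case 3
    then show ?thesis
      using elliptic_seg[of m n] by (auto simp: char_poly_seg_factor)
  qed (use assms(1,2) in \<open>simp_all add: reduced_symbol_m_zero reduced_symbol_n_zero\<close>)
qed

lemma char_poly_seg_lower_bound:
  assumes "c (Z t) \<noteq> 0" "c (Z (Suc t)) \<noteq> 0"
    and "\<And>x y. x \<noteq> 0 \<Longrightarrow> y \<noteq> 0 \<Longrightarrow> char_poly (seg_pts Z t) c x y \<noteq> 0"
  shows "\<exists>\<delta>>0. \<forall>m n. \<delta> * monomial_abs (Z t) m n \<le> cmod (char_poly (seg_pts Z t) c m n)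
                  \<and> \<delta> * monomial_abs (Z (Suc t)) m n \<le> cmod (char_poly (seg_pts Z t) c m n)"
proof -
  define \<alpha> where "\<alpha> = fst (Z t) - fst (Z (Suc t))"
  define \<beta> where "\<beta> = snd (Z (Suc t)) - snd (Z t)"
  have "0 < \<alpha>" "0 < \<beta>"
    using x_decr y_incr by (simp_all add: \<alpha>_def \<beta>_def)
  moreover have "continuous_on UNIV (\<lambda>z. reduced_symbol Z c t (fst z) (snd z))"
    unfolding reduced_symbol_def by (intro continuous_intros)
  moreover have "norm (reduced_symbol Z c t (l ^ \<beta> * m) (l ^ \<alpha> * n))
      = l ^ (\<alpha> * \<beta>) * norm (reduced_symbol Z c t m n)" if "0 < l" for l m n
    using that by (simp add: \<alpha>_def \<beta>_def reduced_symbol_scale norm_mult norm_power)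
  ultimately obtain \<delta> where "0 < \<delta>"
    and \<delta>: "\<And>m n. \<delta> * max (\<bar>m\<bar> ^ \<alpha>) (\<bar>n\<bar> ^ \<beta>) \<le> cmod (reduced_symbol Z c t m n)"
    using quasi_homogeneous_lower_bound[of \<alpha> \<beta> "reduced_symbol Z c t"] reduced_symbol_nonzero[OF assms]
    by blast
  have "\<delta> * monomial_abs (Z t) m n \<le> cmod (char_poly (seg_pts Z t) c m n)
      \<and> \<delta> * monomial_abs (Z (Suc t)) m n \<le> cmod (char_poly (seg_pts Z t) c m n)" for m n
  proof -
    define W where "W = \<bar>m\<bar> ^ fst (Z (Suc t)) * \<bar>n\<bar> ^ snd (Z t)"
    have "fst (Z t) = fst (Z (Suc t)) + \<alpha>" "snd (Z (Suc t)) = snd (Z t) + \<beta>"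
      using x_decr y_incr by (simp_all add: \<alpha>_def \<beta>_def)
    then have "monomial_abs (Z t) m n = W * \<bar>m\<bar> ^ \<alpha>" "monomial_abs (Z (Suc t)) m n = W * \<bar>n\<bar> ^ \<beta>"
      by (simp_all add: monomial_abs_def W_def power_add)
    moreover have "cmod (char_poly (seg_pts Z t) c m n) = W * cmod (reduced_symbol Z c t m n)"
      by (simp add: char_poly_seg_factor W_def norm_mult norm_power)
    moreover have "\<delta> * \<bar>m\<bar> ^ \<alpha> \<le> cmod (reduced_symbol Z c t m n)" "\<delta> * \<bar>n\<bar> ^ \<beta> \<le> cmod (reduced_symbol Z c t m n)"
      using \<delta>[of m n] \<open>0 < \<delta>\<close> by (meson max.cobounded1 max.cobounded2 mult_left_mono order_trans less_imp_le)+
    moreover have "0 \<le> W"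
      by (simp add: W_def)
    ultimately show ?thesis
      by (metis mult_left_mono mult.left_commute)
  qed
  then show ?thesis
    using \<open>0 < \<delta>\<close> by blast
qed

end

subsection \<open>Supporting lines of the core\<close>

definition pairing :: "int \<times> int \<Rightarrow> nat \<times> nat \<Rightarrow> int" where
  "pairing u P = fst u * int (fst P) + snd u * int (snd P)"

definition weight :: "nat \<times> nat \<Rightarrow> real \<Rightarrow> real \<Rightarrow> real" where
  "weight P a b = real (fst P) * a + real (snd P) * b"

lemma node_pt_eq_iff: "node_pt P = node_pt Q \<longleftrightarrow> P = Q"
  by (simp add: node_pt_def prod_eq_iff)

lemma weight_conic_combination:
  assumes "(a, b) = k1 *\<^sub>R map_prod of_int of_int u + k2 *\<^sub>R map_prod of_int of_int w"
  shows "weight P a b = k1 * of_int (pairing u P) + k2 * of_int (pairing w P)"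
  using assms by (simp add: weight_def pairing_def prod_eq_iff algebra_simps)

lemma pairing_on_seg_pts:
  assumes "P \<in> seg_pts Z s" "pairing u (Z s) \<le> M" "pairing u (Z (Suc s)) \<le> M"
  shows "pairing u P \<le> M"
    and "pairing u P = M \<Longrightarrow> (P = Z s \<and> pairing u (Z s) = M) \<or> (P = Z (Suc s) \<and> pairing u (Z (Suc s)) = M)
           \<or> (pairing u (Z s) = M \<and> pairing u (Z (Suc s)) = M)"
proof -
  define f where "f p = of_int (fst u) * fst p + of_int (snd u) * snd p" for p :: "real \<times> real"
  have "linear f"
    unfolding linear_iff f_def by (simp add: algebra_simps)
  have f_node: "f (node_pt Q) = of_int (pairing u Q)" for Q
    by (simp add: f_def node_pt_def pairing_def)
  have "node_pt P \<in> closed_segment (node_pt (Z s)) (node_pt (Z (Suc s)))"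
    using assms(1) by (simp add: seg_pts_def)
  note on_seg = linear_on_closed_segment[OF \<open>linear f\<close> this, of "of_int M"]
  show "pairing u P \<le> M"
    using on_seg(1) assms(2,3) by (simp add: f_node)
  show "pairing u P = M \<Longrightarrow> (P = Z s \<and> pairing u (Z s) = M) \<or> (P = Z (Suc s) \<and> pairing u (Z (Suc s)) = M)
           \<or> (pairing u (Z s) = M \<and> pairing u (Z (Suc s)) = M)"
    using on_seg(2) assms(2,3) by (simp add: f_node node_pt_eq_iff)
qed

lemma finite_core_pts: "finite (core_pts K Z)"
  by (simp add: core_pts_def finite_seg_pts)

locale concave_chain =
  fixes K :: nat and Z :: "nat \<Rightarrow> nat \<times> nat"
  assumes concave: "concave_broken_line K Z"
begin

lemma two_le_K: "2 \<le> K"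
  using concave by (simp add: concave_broken_line_def)

lemma edge_monotone: "1 \<le> t \<Longrightarrow> t < K \<Longrightarrow> fst (Z (Suc t)) < fst (Z t) \<and> snd (Z t) < snd (Z (Suc t))"
  using concave by (simp add: concave_broken_line_def)

lemma slope_step: "1 \<le> t \<Longrightarrow> t < K - 1 \<Longrightarrow> slope Z t < slope Z (Suc t)"
  using concave by (simp add: concave_broken_line_def)

lemma slope_strict_mono:
  assumes "1 \<le> i" "i < t" "t < K"
  shows "slope Z i < slope Z t"
  using less_by_Suc_steps[of 1 "K - 1" "slope Z", OF slope_step] assms by simp

(* For 0 < t < K, normal t is an outward normal of the edge [Z t, Z (Suc t)]; normal 0 and normal K
   belong to the horizontal ray from Z 1 and the vertical ray from Z K that close off the core.
   Over the core, pairing (normal t) is maximal exactly on face t. *)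
definition normal :: "nat \<Rightarrow> int \<times> int" where
  "normal t = (if t = 0 then (0, -1)
     else if t < K then (int (snd (Z (Suc t))) - int (snd (Z t)), int (fst (Z t)) - int (fst (Z (Suc t))))
     else (-1, 0))"

definition face :: "nat \<Rightarrow> (nat \<times> nat) set" where
  "face t = (if t = 0 then {Z 1} else if t < K then seg_pts Z t else {Z K})"

lemma normal_pos:
  assumes "1 \<le> t" "t < K"
  shows "0 < fst (normal t)" "0 < snd (normal t)"
  using edge_monotone[OF assms] assms by (simp_all add: normal_def)

lemma slope_eq_normal:
  assumes "1 \<le> t" "t < K"
  shows "slope Z t = - of_int (fst (normal t)) / of_int (snd (normal t))"
  using assms by (simp add: slope_def normal_def divide_simps) (simp add: algebra_simps)

lemma pairing_edge:
  assumes "1 \<le> i" "i < K"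
  shows "pairing u (Z (Suc i)) - pairing u (Z i) = cross2 (normal i) u"
  using assms by (simp add: pairing_def cross2_def normal_def algebra_simps)

lemma cross_normal_pos:
  assumes "i < t" "t \<le> K" "0 < i \<or> t < K"
  shows "0 < cross2 (normal i) (normal t)"
proof -
  consider "i = 0" | "t = K" "0 < i" | "0 < i" "t < K"
    using assms by linarith
  then show ?thesis
  proof cases
    case 1
    then show ?thesis
      using normal_pos[of t] assms by (simp add: cross2_def normal_def)
  next
    case 2
    then show ?thesis
      using normal_pos[of i] assms by (simp add: cross2_def normal_def)
  next
    case 3
    define u where "u = map_prod real_of_int real_of_int (normal i)"
    define w where "w = map_prod real_of_int real_of_int (normal t)"
    have "0 < fst u" "0 < snd u" "0 < fst w" "0 < snd w"
      using normal_pos[of i] normal_pos[of t] 3 assms by (simp_all add: u_def w_def)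
    moreover have "- fst u / snd u < - fst w / snd w"
      using slope_strict_mono[of i t] slope_eq_normal[of i] slope_eq_normal[of t] 3 assms
      by (simp add: u_def w_def)
    ultimately have "0 < fst u * snd w - snd u * fst w"
      by (simp add: divide_simps mult.commute)
    then show ?thesis
      by (simp add: u_def w_def cross2_def flip: of_int_mult of_int_diff)
  qed
qed

lemma pairing_normal_vertex:
  assumes "t \<le> K" "i \<in> {1..K}" "j \<in> {1..K}" "j \<in> {t, Suc t}"
  shows "pairing (normal t) (Z i) \<le> pairing (normal t) (Z j)"
    and "i \<notin> {t, Suc t} \<Longrightarrow> pairing (normal t) (Z i) < pairing (normal t) (Z j)"
proof -
  define f where "f l = pairing (normal t) (Z l)" for l
  have step: "f (Suc l) - f l = cross2 (normal l) (normal t)" if "1 \<le> l" "l < K" for l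
    unfolding f_def using that by (rule pairing_edge)
  have up: "f l < f (Suc l)" if "1 \<le> l" "l < t" for l
    using step[of l] cross_normal_pos[of l t] that assms(1) by simp
  have down: "(- f) l < (- f) (Suc l)" if "Suc t \<le> l" "l < K" for l
    using step[of l] cross_normal_pos[of t l] that by (simp add: cross2_def algebra_simps)
  have flat: "f (Suc t) = f t" if "1 \<le> t" "t < K"
    using step[of t] that by (simp add: cross2_def)
  have left: "f i < f t" if "1 \<le> i" "i < t"
    using less_by_Suc_steps[of 1 t f, OF up] that by simp
  have right: "f i < f (Suc t)" if "Suc t < i" "i \<le> K"
    using less_by_Suc_steps[of "Suc t" K "- f", OF down] that by simp
  have "f i \<le> f j \<and> (i \<notin> {t, Suc t} \<longrightarrow> f i < f j)"
  proof (cases "i \<le> t")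
    case True
    then have "f j = f t"
      using assms flat by auto
    then show ?thesis
      using left True assms by (cases "i = t") auto
  next
    case False
    then have "f j = f (Suc t)"
      using assms flat by auto
    then show ?thesis
      using right False assms by (cases "i = Suc t") auto
  qed
  then show "pairing (normal t) (Z i) \<le> pairing (normal t) (Z j)"
    and "i \<notin> {t, Suc t} \<Longrightarrow> pairing (normal t) (Z i) < pairing (normal t) (Z j)"
    by (simp_all add: f_def)
qed

lemma vertex_in_face:
  assumes "t \<le> K" "i \<in> {1..K}" "i \<in> {t, Suc t}"
  shows "Z i \<in> face t"
  using assms endpoints_in_seg_pts[of Z t] by (auto simp: face_def)

lemma vertex_in_core_pts:
  assumes "j \<in> {1..K}"
  shows "Z j \<in> core_pts K Z"
proof (cases "j < K")
  case True
  then show ?thesis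
    using assms endpoints_in_seg_pts(1)[of Z j] by (auto simp: core_pts_def)
next
  case False
  then have "j = Suc (K - 1)" "K - 1 \<in> {1..<K}"
    using assms two_le_K by auto
  then show ?thesis
    using endpoints_in_seg_pts(2)[of Z "K - 1"] unfolding core_pts_def by auto
qed

lemma core_support:
  assumes "t \<le> K" "P \<in> core_pts K Z" "j \<in> {1..K}" "j \<in> {t, Suc t}"
  shows "pairing (normal t) P \<le> pairing (normal t) (Z j)"
    and "P \<notin> face t \<Longrightarrow> pairing (normal t) P + 1 \<le> pairing (normal t) (Z j)"
proof -
  obtain s where s: "1 \<le> s" "s < K" and P: "P \<in> seg_pts Z s"
    using assms(2) by (auto simp: core_pts_def)
  have ends: "s \<in> {1..K}" "Suc s \<in> {1..K}"
    using s by auto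
  note vertex_le = pairing_normal_vertex(1)[OF assms(1) _ assms(3,4)]
  note on_seg = pairing_on_seg_pts[OF P vertex_le[OF ends(1)] vertex_le[OF ends(2)]]
  show "pairing (normal t) P \<le> pairing (normal t) (Z j)"
    by (rule on_seg(1))
  assume "P \<notin> face t"
  have vertex_eq: "i \<in> {t, Suc t}" if "i \<in> {1..K}" "pairing (normal t) (Z i) = pairing (normal t) (Z j)" for i
    using pairing_normal_vertex(2)[OF assms(1) that(1) assms(3,4)] that(2) by force
  have "pairing (normal t) P \<noteq> pairing (normal t) (Z j)"
  proof
    assume "pairing (normal t) P = pairing (normal t) (Z j)"
    then consider "P = Z s" "s \<in> {t, Suc t}" | "P = Z (Suc s)" "Suc s \<in> {t, Suc t}"
      | "s \<in> {t, Suc t}" "Suc s \<in> {t, Suc t}"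
      using on_seg(2) vertex_eq[OF ends(1)] vertex_eq[OF ends(2)] by blast
    then show False
    proof cases
      case 3
      then have "face t = seg_pts Z s"
        using s by (auto simp: face_def)
      then show False
        using P \<open>P \<notin> face t\<close> by simp
    qed (use vertex_in_face[OF assms(1) ends(1)] vertex_in_face[OF assms(1) ends(2)] \<open>P \<notin> face t\<close> in auto)
  qed
  then show "pairing (normal t) P + 1 \<le> pairing (normal t) (Z j)"
    using on_seg(1) by simp
qed

lemma vertex_normal_cone:
  fixes a b :: real
  assumes "0 < max a b"
  shows "\<exists>i\<in>{1..K}. \<exists>k1 k2. 0 \<le> k1 \<and> 0 \<le> k2 \<and>
           (a, b) = k1 *\<^sub>R map_prod of_int of_int (normal (i - 1)) + k2 *\<^sub>R map_prod of_int of_int (normal i)"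
proof -
  (* The cone between normal (i - 1) and normal i contains (a, b) iff D (i - 1) \<ge> 0 \<ge> D i;
     p and q are indices at which the required signs can be read off from the signs of a and b. *)
  define D where "D t = cross2 (map_prod real_of_int real_of_int (normal t)) (a, b)" for t
  have D_middle: "D t = of_int (fst (normal t)) * b - of_int (snd (normal t)) * a" if "1 \<le> t" "t < K" for t
    by (simp add: D_def cross2_def)
  have "K - 1 < K" "1 \<le> K - 1" "1 < K"
    using two_le_K by simp_all
  note pos_last = normal_pos[OF \<open>1 \<le> K - 1\<close> \<open>K - 1 < K\<close>]
  note pos_first = normal_pos[OF order_refl \<open>1 < K\<close>]
  define p where "p = (if a < 0 then K - 1 else 0)"
  define q where "q = (if b < 0 then 1 else K)"
  have "p < q"
    using assms two_le_K by (auto simp: p_def q_def)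
  moreover have "0 \<le> D p"
  proof (cases "a < 0")
    case True
    then have "0 < b"
      using assms by simp
    then have "0 < of_int (fst (normal (K - 1))) * b" "of_int (snd (normal (K - 1))) * a < 0"
      using pos_last True by (simp_all add: mult_pos_neg)
    then show ?thesis
      using D_middle[OF \<open>1 \<le> K - 1\<close> \<open>K - 1 < K\<close>] True by (simp add: p_def)
  qed (simp add: p_def D_def cross2_def normal_def)
  moreover have "D q \<le> 0"
  proof (cases "b < 0")
    case True
    then have "0 < a"
      using assms by simp
    then have "of_int (fst (normal 1)) * b < 0" "0 < of_int (snd (normal 1)) * a"
      using pos_first True by (simp_all add: mult_pos_neg)
    then show ?thesis
      using D_middle[OF order_refl \<open>1 < K\<close>] True by (simp add: q_def)
  qed (use two_le_K in \<open>simp add: q_def D_def cross2_def normal_def\<close>)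
  ultimately obtain i where i: "p < i" "i \<le> q" "0 \<le> D (i - 1)" "D i \<le> 0"
    using discrete_ivt by blast
  have "i \<in> {1..K}"
    using i two_le_K by (auto simp: p_def q_def split: if_splits)
  moreover have "0 < cross2 (map_prod real_of_int real_of_int (normal (i - 1))) (map_prod real_of_int real_of_int (normal i))"
  proof -
    have "0 < i - 1 \<or> i < K"
      using \<open>i \<in> {1..K}\<close> two_le_K by auto
    then have "0 < cross2 (normal (i - 1)) (normal i)"
      using cross_normal_pos[of "i - 1" i] \<open>i \<in> {1..K}\<close> by simp
    then show ?thesis
      by (simp add: cross2_def flip: of_int_mult of_int_diff)
  qed
  ultimately show ?thesis
    using cone_decomposition[of _ _ "(a, b)"] i(3,4) unfolding D_def by blast
qed

lemma weight_le_vertex: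
  assumes "i \<in> {1..K}" "0 \<le> k1" "0 \<le> k2"
    and cone: "(a, b) = k1 *\<^sub>R map_prod of_int of_int (normal (i - 1)) + k2 *\<^sub>R map_prod of_int of_int (normal i)"
    and "P \<in> core_pts K Z"
  shows "weight P a b + k1 * of_bool (P \<notin> face (i - 1)) + k2 * of_bool (P \<notin> face i) \<le> weight (Z i) a b"
proof -
  have gap: "of_int (pairing (normal t) P) + of_bool (P \<notin> face t) \<le> real_of_int (pairing (normal t) (Z i))"
    if "t \<le> K" "i \<in> {t, Suc t}" for t
  proof (cases "P \<in> face t")
    case True
    then show ?thesis
      using core_support(1)[OF that(1) assms(5,1) that(2)] by simp
  next
    case False
    then have "real_of_int (pairing (normal t) P + 1) \<le> real_of_int (pairing (normal t) (Z i))"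
      using core_support(2)[OF that(1) assms(5,1) that(2) False] by (simp only: of_int_le_iff)
    then show ?thesis
      using False by simp
  qed
  have "of_int (pairing (normal (i - 1)) P) + of_bool (P \<notin> face (i - 1))
          \<le> real_of_int (pairing (normal (i - 1)) (Z i))"
    and "of_int (pairing (normal i) P) + of_bool (P \<notin> face i) \<le> real_of_int (pairing (normal i) (Z i))"
    by (rule gap; use assms(1) in auto)+
  then have "k1 * (of_int (pairing (normal (i - 1)) P) + of_bool (P \<notin> face (i - 1)))
        + k2 * (of_int (pairing (normal i) P) + of_bool (P \<notin> face i))
      \<le> k1 * of_int (pairing (normal (i - 1)) (Z i)) + k2 * of_int (pairing (normal i) (Z i))"
    using assms(2,3) by (intro add_mono mult_left_mono)
  then show ?thesis
    using weight_conic_combination[OF cone, of P] weight_conic_combination[OF cone, of "Z i"]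
    by (simp add: algebra_simps)
qed

lemma segment_at_vertex:
  fixes k1 k2 :: real
  assumes "i \<in> {1..K}" "0 \<le> k1" "0 \<le> k2"
  shows "\<exists>t\<in>{1..<K}. i \<in> {t, Suc t} \<and> (\<forall>P. P \<notin> seg_pts Z t \<longrightarrow>
           (k1 + k2) / 2 \<le> k1 * of_bool (P \<notin> face (i - 1)) + k2 * of_bool (P \<notin> face i))"
proof -
  have half: "(k1 + k2) / 2 \<le> k1 * of_bool (P \<notin> face (i - 1)) + k2 * of_bool (P \<notin> face i)"
    if "P \<notin> face (i - 1) \<and> k2 \<le> k1 \<or> P \<notin> face i \<and> k1 \<le> k2" for P
    using that assms(2,3) by auto
  have face_seg: "face t = seg_pts Z t" if "t \<in> {1..<K}" for t
    using that by (simp add: face_def)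
  have "Suc (K - 1) = K"
    using two_le_K by simp
  then have end_faces: "face 0 \<subseteq> seg_pts Z 1" "face K \<subseteq> seg_pts Z (K - 1)"
    using endpoints_in_seg_pts(1)[of Z 1] endpoints_in_seg_pts(2)[of Z "K - 1"] by (auto simp: face_def)
  have "k2 \<le> k1 \<or> k1 \<le> k2"
    by linarith
  have "i = 1 \<or> i = K \<or> 1 < i \<and> i < K"
    using assms(1) by auto
  then have "\<exists>t\<in>{1..<K}. i \<in> {t, Suc t} \<and>
      (\<forall>P. P \<notin> seg_pts Z t \<longrightarrow> P \<notin> face (i - 1) \<and> k2 \<le> k1 \<or> P \<notin> face i \<and> k1 \<le> k2)"
  proof (elim disjE conjE)
    assume "i = 1"
    then show ?thesis
      using end_faces face_seg[of 1] two_le_K \<open>k2 \<le> k1 \<or> k1 \<le> k2\<close> by (intro bexI[of _ 1]) auto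
  next
    assume "i = K"
    then show ?thesis
      using end_faces face_seg[of "K - 1"] two_le_K \<open>Suc (K - 1) = K\<close> \<open>k2 \<le> k1 \<or> k1 \<le> k2\<close>
      by (intro bexI[of _ "K - 1"]) auto
  next
    assume "1 < i" "i < K"
    then have "i - 1 \<in> {1..<K}" "i \<in> {1..<K}" "i = Suc (i - 1)"
      by auto
    then show ?thesis
    proof (cases "k2 \<le> k1")
      case True
      then show ?thesis
        using face_seg[OF \<open>i - 1 \<in> {1..<K}\<close>] \<open>i - 1 \<in> {1..<K}\<close> \<open>i = Suc (i - 1)\<close>
        by (intro bexI[of _ "i - 1"]) auto
    next
      case False
      then show ?thesis
        using face_seg[OF \<open>i \<in> {1..<K}\<close>] \<open>i \<in> {1..<K}\<close> by (intro bexI[of _ i]) auto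
    qed
  qed
  then show ?thesis
    using half by blast
qed

lemma dominant_segment:
  fixes \<Lambda> :: real
  shows "\<exists>L. \<forall>a b. L \<le> max a b \<longrightarrow> (\<exists>t\<in>{1..<K}. \<exists>V\<in>{Z t, Z (Suc t)}.
           (\<forall>P\<in>core_pts K Z. weight P a b \<le> weight V a b) \<and>
           (\<forall>P\<in>core_pts K Z - seg_pts Z t. weight P a b + \<Lambda> \<le> weight V a b))"
proof -
  define B where "B = real_of_int (Max ((\<lambda>t. max \<bar>fst (normal t)\<bar> \<bar>snd (normal t)\<bar>) ` {..K}))"
  have B_ge: "\<bar>of_int (fst (normal t))\<bar> \<le> B \<and> \<bar>of_int (snd (normal t))\<bar> \<le> B" if "t \<le> K" for t
  proof -
    have "max \<bar>fst (normal t)\<bar> \<bar>snd (normal t)\<bar> \<le> Max ((\<lambda>t. max \<bar>fst (normal t)\<bar> \<bar>snd (normal t)\<bar>) ` {..K})"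
      using that by (intro Max_ge) auto
    then show ?thesis
      by (simp add: B_def flip: of_int_abs)
  qed
  have "1 \<le> B"
    using B_ge[of 0] by (simp add: normal_def)
  have scaled_le: "k * of_int x \<le> k * B" if "0 \<le> k" "\<bar>of_int x\<bar> \<le> B" for k x
    using that by (meson abs_ge_self order_trans mult_left_mono)
  define L where "L = 2 * B * \<bar>\<Lambda>\<bar> + 1"
  show ?thesis
  proof (intro exI allI impI)
    fix a b :: real
    assume "L \<le> max a b"
    moreover have "0 < L"
      using \<open>1 \<le> B\<close> by (simp add: L_def add_nonneg_pos)
    ultimately obtain i k1 k2 where i: "i \<in> {1..K}" and k: "0 \<le> k1" "0 \<le> k2"
      and cone: "(a, b) = k1 *\<^sub>R map_prod of_int of_int (normal (i - 1)) + k2 *\<^sub>R map_prod of_int of_int (normal i)"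
      using vertex_normal_cone[of a b] by auto
    have "a \<le> k1 * B + k2 * B" "b \<le> k1 * B + k2 * B"
      using cone scaled_le[OF k(1)] scaled_le[OF k(2)] B_ge[of "i - 1"] B_ge[of i] i
      by (auto simp: prod_eq_iff intro: add_mono)
    then have "B * (2 * \<bar>\<Lambda>\<bar>) \<le> B * (k1 + k2)"
      using \<open>L \<le> max a b\<close> by (simp add: L_def algebra_simps)
    then have "\<Lambda> \<le> (k1 + k2) / 2"
      using \<open>1 \<le> B\<close> by (simp add: mult_le_cancel_left_pos)
    obtain t where t: "t \<in> {1..<K}" "i \<in> {t, Suc t}"
      and off_seg: "\<And>P. P \<notin> seg_pts Z t \<Longrightarrow>
          (k1 + k2) / 2 \<le> k1 * of_bool (P \<notin> face (i - 1)) + k2 * of_bool (P \<notin> face i)"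
      using segment_at_vertex[OF i k] by blast
    note le_vertex = weight_le_vertex[OF i k cone]
    have "weight P a b \<le> weight (Z i) a b" if "P \<in> core_pts K Z" for P
      using le_vertex[OF that] k by (cases "P \<in> face (i - 1)"; cases "P \<in> face i") auto
    moreover have "weight P a b + \<Lambda> \<le> weight (Z i) a b" if "P \<in> core_pts K Z" "P \<notin> seg_pts Z t" for P
      using le_vertex[OF that(1)] off_seg[OF that(2)] \<open>\<Lambda> \<le> (k1 + k2) / 2\<close> by linarith
    moreover have "Z i \<in> {Z t, Z (Suc t)}"
      using t by auto
    ultimately show "\<exists>t\<in>{1..<K}. \<exists>V\<in>{Z t, Z (Suc t)}.
           (\<forall>P\<in>core_pts K Z. weight P a b \<le> weight V a b) \<and>
           (\<forall>P\<in>core_pts K Z - seg_pts Z t. weight P a b + \<Lambda> \<le> weight V a b)"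
      using t by blast
  qed
qed

lemma dominant_segment_monomials:
  fixes \<epsilon> :: real
  assumes "0 < \<epsilon>"
  shows "\<exists>M>0. \<forall>m n. m \<noteq> 0 \<longrightarrow> n \<noteq> 0 \<longrightarrow> M \<le> max \<bar>m\<bar> \<bar>n\<bar> \<longrightarrow>
           (\<exists>t\<in>{1..<K}. \<exists>V\<in>{Z t, Z (Suc t)}.
              (\<forall>P\<in>core_pts K Z. monomial_abs P m n \<le> monomial_abs V m n) \<and>
              (\<forall>P\<in>core_pts K Z - seg_pts Z t. monomial_abs P m n \<le> \<epsilon> * monomial_abs V m n))"
proof -
  obtain L where L: "\<And>a b. L \<le> max a b \<Longrightarrow> \<exists>t\<in>{1..<K}. \<exists>V\<in>{Z t, Z (Suc t)}.
      (\<forall>P\<in>core_pts K Z. weight P a b \<le> weight V a b) \<and>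
      (\<forall>P\<in>core_pts K Z - seg_pts Z t. weight P a b + - ln \<epsilon> \<le> weight V a b)"
    using dominant_segment[of "- ln \<epsilon>"] by blast
  have "\<exists>t\<in>{1..<K}. \<exists>V\<in>{Z t, Z (Suc t)}.
      (\<forall>P\<in>core_pts K Z. monomial_abs P m n \<le> monomial_abs V m n) \<and>
      (\<forall>P\<in>core_pts K Z - seg_pts Z t. monomial_abs P m n \<le> \<epsilon> * monomial_abs V m n)"
    if "m \<noteq> 0" "n \<noteq> 0" "exp L \<le> max \<bar>m\<bar> \<bar>n\<bar>" for m n
  proof -
    have mono_exp: "monomial_abs P m n = exp (weight P (ln \<bar>m\<bar>) (ln \<bar>n\<bar>))" for P
      using monomial_abs_eq_exp[OF that(1,2)] by (simp add: weight_def)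
    have "L \<le> max (ln \<bar>m\<bar>) (ln \<bar>n\<bar>)"
      using that by (cases "\<bar>n\<bar> \<le> \<bar>m\<bar>") (auto simp: max_def ln_ge_iff)
    then obtain t V where "t \<in> {1..<K}" "V \<in> {Z t, Z (Suc t)}"
      and dom: "\<forall>P\<in>core_pts K Z. weight P (ln \<bar>m\<bar>) (ln \<bar>n\<bar>) \<le> weight V (ln \<bar>m\<bar>) (ln \<bar>n\<bar>)"
      and gap: "\<forall>P\<in>core_pts K Z - seg_pts Z t.
          weight P (ln \<bar>m\<bar>) (ln \<bar>n\<bar>) + - ln \<epsilon> \<le> weight V (ln \<bar>m\<bar>) (ln \<bar>n\<bar>)"
      using L by blast
    moreover have "monomial_abs P m n \<le> \<epsilon> * monomial_abs V m n" if "P \<in> core_pts K Z - seg_pts Z t" for P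
    proof -
      have "weight P (ln \<bar>m\<bar>) (ln \<bar>n\<bar>) \<le> ln \<epsilon> + weight V (ln \<bar>m\<bar>) (ln \<bar>n\<bar>)"
        using bspec[OF gap that] by linarith
      then have "exp (weight P (ln \<bar>m\<bar>) (ln \<bar>n\<bar>)) \<le> exp (ln \<epsilon> + weight V (ln \<bar>m\<bar>) (ln \<bar>n\<bar>))"
        by simp
      then show ?thesis
        using \<open>0 < \<epsilon>\<close> by (simp add: mono_exp exp_add)
    qed
    ultimately show ?thesis
      by (auto simp: mono_exp)
  qed
  then show ?thesis
    by (intro exI[of _ "exp L"]) auto
qed

end

context
  fixes K :: nat and Z :: "nat \<Rightarrow> nat \<times> nat" and c :: "nat \<times> nat \<Rightarrow> complex"
  assumes core: "core_operator K Z c" and ell: "elliptic K Z c"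
begin

interpretation concave_chain K Z
  using core by unfold_locales (simp add: core_operator_def)

lemma char_poly_seg_lower_bound_uniform:
  "\<exists>\<delta>>0. \<forall>t\<in>{1..<K}. \<forall>m n.
     \<delta> * monomial_abs (Z t) m n \<le> cmod (char_poly (seg_pts Z t) c m n) \<and>
     \<delta> * monomial_abs (Z (Suc t)) m n \<le> cmod (char_poly (seg_pts Z t) c m n)"
proof (rule ex_pos_uniform_finite)
  fix t assume "t \<in> {1..<K}"
  then show "\<exists>\<delta>>0. \<forall>m n. \<delta> * monomial_abs (Z t) m n \<le> cmod (char_poly (seg_pts Z t) c m n) \<and>
     \<delta> * monomial_abs (Z (Suc t)) m n \<le> cmod (char_poly (seg_pts Z t) c m n)"
    using edge_monotone[of t] core ell
    by (intro char_poly_seg_lower_bound) (auto simp: core_operator_def elliptic_def)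
next
  fix t and \<delta> \<delta>' :: real
  assume "\<forall>m n. \<delta> * monomial_abs (Z t) m n \<le> cmod (char_poly (seg_pts Z t) c m n) \<and>
     \<delta> * monomial_abs (Z (Suc t)) m n \<le> cmod (char_poly (seg_pts Z t) c m n)" "0 < \<delta>'" "\<delta>' \<le> \<delta>"
  moreover have "0 \<le> monomial_abs P m n" for P m n
    by (simp add: monomial_abs_def)
  ultimately show "\<forall>m n. \<delta>' * monomial_abs (Z t) m n \<le> cmod (char_poly (seg_pts Z t) c m n) \<and>
     \<delta>' * monomial_abs (Z (Suc t)) m n \<le> cmod (char_poly (seg_pts Z t) c m n)"
    by (meson mult_right_mono order_trans)
qed simp

lemma char_poly_dominates_vertices_off_axes:
  "\<exists>C M. 0 < M \<and> (\<forall>j\<in>{1..K}. \<forall>m n. m \<noteq> 0 \<longrightarrow> n \<noteq> 0 \<longrightarrow> M \<le> max \<bar>m\<bar> \<bar>n\<bar> \<longrightarrow>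
      monomial_abs (Z j) m n \<le> C * cmod (char_poly (core_pts K Z) c m n))"
proof -
  obtain \<delta> where "0 < \<delta>" and seg_bound: "\<And>t m n. t \<in> {1..<K} \<Longrightarrow>
      \<delta> * monomial_abs (Z t) m n \<le> cmod (char_poly (seg_pts Z t) c m n) \<and>
      \<delta> * monomial_abs (Z (Suc t)) m n \<le> cmod (char_poly (seg_pts Z t) c m n)"
    using char_poly_seg_lower_bound_uniform by blast
  define A where "A = (\<Sum>P\<in>core_pts K Z. cmod (c P) * (2 * pi) ^ (fst P + snd P))"
  define \<epsilon> where "\<epsilon> = \<delta> / (2 * (A + 1))"
  have "0 \<le> A"
    by (simp add: A_def sum_nonneg)
  then have "0 < \<epsilon>" "A * \<epsilon> \<le> \<delta> / 2"
    using \<open>0 < \<delta>\<close> by (simp_all add: \<epsilon>_def field_simps)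
  then obtain M where "0 < M" and dominant: "\<And>m n. m \<noteq> 0 \<Longrightarrow> n \<noteq> 0 \<Longrightarrow> M \<le> max \<bar>m\<bar> \<bar>n\<bar> \<Longrightarrow>
      \<exists>t\<in>{1..<K}. \<exists>V\<in>{Z t, Z (Suc t)}. (\<forall>P\<in>core_pts K Z. monomial_abs P m n \<le> monomial_abs V m n) \<and>
        (\<forall>P\<in>core_pts K Z - seg_pts Z t. monomial_abs P m n \<le> \<epsilon> * monomial_abs V m n)"
    using dominant_segment_monomials by blast
  have "monomial_abs (Z j) m n \<le> 2 / \<delta> * cmod (char_poly (core_pts K Z) c m n)"
    if j: "j \<in> {1..K}" and large: "m \<noteq> 0" "n \<noteq> 0" "M \<le> max \<bar>m\<bar> \<bar>n\<bar>" for j m n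
  proof -
    obtain t V where t: "t \<in> {1..<K}" and "V \<in> {Z t, Z (Suc t)}"
      and dom: "\<forall>P\<in>core_pts K Z. monomial_abs P m n \<le> monomial_abs V m n"
      and gap: "\<forall>P\<in>core_pts K Z - seg_pts Z t. monomial_abs P m n \<le> \<epsilon> * monomial_abs V m n"
      using dominant[OF large] by blast
    have "\<delta> / 2 * monomial_abs V m n \<le> cmod (char_poly (core_pts K Z) c m n)"
    proof (rule char_poly_dominant_part)
      show "seg_pts Z t \<subseteq> core_pts K Z"
        using t by (auto simp: core_pts_def)
      show "\<delta> * monomial_abs V m n \<le> cmod (char_poly (seg_pts Z t) c m n)"
        using seg_bound[OF t] \<open>V \<in> {Z t, Z (Suc t)}\<close> by auto
      show "(\<Sum>P\<in>core_pts K Z. cmod (c P) * (2 * pi) ^ (fst P + snd P)) * \<epsilon> \<le> \<delta> / 2"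
        using \<open>A * \<epsilon> \<le> \<delta> / 2\<close> by (simp add: A_def)
    qed (use gap finite_core_pts \<open>0 < \<epsilon>\<close> in \<open>simp_all add: monomial_abs_def\<close>)
    moreover have "monomial_abs (Z j) m n \<le> monomial_abs V m n"
      using dom vertex_in_core_pts[OF j] by blast
    ultimately have "\<delta> / 2 * monomial_abs (Z j) m n \<le> cmod (char_poly (core_pts K Z) c m n)"
      using \<open>0 < \<delta>\<close> by (meson half_gt_zero mult_left_mono order_trans less_imp_le)
    then show ?thesis
      using \<open>0 < \<delta>\<close> by (simp add: field_simps)
  qed
  then show ?thesis
    using \<open>0 < M\<close> by (intro exI[of _ "2 / \<delta>"] exI[of _ M]) auto
qed

end

theorem lemma3:
  fixes K :: nat and Z :: "nat \<Rightarrow> nat \<times> nat" and c :: "nat \<times> nat \<Rightarrow> complex"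
  assumes "core_operator K Z c" and "elliptic K Z c"
  shows "\<forall>j\<in>{1..K}. \<exists>C::real. \<exists>M::real. \<forall>m n :: real. max \<bar>m\<bar> \<bar>n\<bar> \<ge> M \<longrightarrow>
           \<bar>m\<bar> ^ fst (Z j) * \<bar>n\<bar> ^ snd (Z j) \<le> C * cmod (char_poly (core_pts K Z) c m n)"
proof (intro ballI)
  fix j assume "j \<in> {1..K}"
  obtain C M where "0 < M" and off_axes: "\<And>m n. m \<noteq> 0 \<Longrightarrow> n \<noteq> 0 \<Longrightarrow> M \<le> max \<bar>m\<bar> \<bar>n\<bar> \<Longrightarrow>
      monomial_abs (Z j) m n \<le> C * cmod (char_poly (core_pts K Z) c m n)"
    using char_poly_dominates_vertices_off_axes[OF assms] \<open>j \<in> {1..K}\<close> by blast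
  define h where "h m n = C * cmod (char_poly (core_pts K Z) c m n) - monomial_abs (Z j) m n" for m n
  have cont: "isCont (\<lambda>x. h x n) 0" "isCont (\<lambda>y. h m y) 0" for m n
    unfolding h_def char_poly_def monomial_abs_def by (intro continuous_intros)+
  have "0 \<le> h m n" if "M \<le> max \<bar>m\<bar> \<bar>n\<bar>" for m n
    by (rule nonneg_extends_to_axes[of M h, OF \<open>0 < M\<close> cont _ that]) (simp add: h_def off_axes)
  then show "\<exists>C M. \<forall>m n :: real. max \<bar>m\<bar> \<bar>n\<bar> \<ge> M \<longrightarrow>
      \<bar>m\<bar> ^ fst (Z j) * \<bar>n\<bar> ^ snd (Z j) \<le> C * cmod (char_poly (core_pts K Z) c m n)"
    by (auto simp: h_def monomial_abs_def)
qed

end
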